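(* For integers $M\ge1$ and $0\le b\le M$, let $H_{M,b}$ be the number of Sturmian factors of length $M$ (over $\{0,1\}$) containing at least $b$ letters $1$. Then for every $\delta>0$ there is a constant $K_\delta$ (independent of $M$ and $b$) such that \[ H_{M,b}\ge\frac{1}{\pi^2}(M-b)M^2-K_\delta M^{2+\delta}. \]
   Context: A Sturmian word over $\{0,1\}$ is a bi-infinite word $(u_n)_{n\in\mathbb{Z}}$ with $u_n=\lfloor (n+1)\alpha+\beta\rfloor-\lfloor n\alpha+\beta\rfloor$ for all $n$, or $u_n=\lceil (n+1)\alpha+\beta\rceil-\lceil n\alpha+\beta\rceil$ for all $n$, where $\alpha\in(0,1)$ is irrational and $\beta\in[0,1)$. A Sturmian factor is a finite word occurring as a block of consecutive letters in some Sturmian word. *)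

theory Defs
  imports Complex_Main
begin

text \<open>Bi-infinite words over the alphabet {0,1} are modelled as functions int => int.\<close>

definition sturmian_word :: "(int \<Rightarrow> int) \<Rightarrow> bool" where
  "sturmian_word u \<longleftrightarrow>
     (\<exists>\<alpha> \<beta> :: real. 0 < \<alpha> \<and> \<alpha> < 1 \<and> \<alpha> \<notin> \<rat> \<and> 0 \<le> \<beta> \<and> \<beta> < 1 \<and>
        ((\<forall>n. u n = \<lfloor>(of_int n + 1) * \<alpha> + \<beta>\<rfloor> - \<lfloor>of_int n * \<alpha> + \<beta>\<rfloor>) \<or>
         (\<forall>n. u n = \<lceil>(of_int n + 1) * \<alpha> + \<beta>\<rceil> - \<lceil>of_int n * \<alpha> + \<beta>\<rceil>)))"

definition sturmian_factor :: "int list \<Rightarrow> bool" where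
  "sturmian_factor w \<longleftrightarrow>
     (\<exists>u k. sturmian_word u \<and> w = map (\<lambda>i. u (k + int i)) [0..<length w])"

definition H :: "nat \<Rightarrow> nat \<Rightarrow> nat" where
  "H M b = card {w. sturmian_factor w \<and> length w = M \<and> b \<le> length (filter (\<lambda>x. x = 1) w)}"

end

theory Submission
  imports Defs "HOL-Analysis.Analysis" "HOL-Computational_Algebra.Squarefree"
begin

(* For a fraction p/q in lowest terms with b/M <= p/q < 1 and q <= M, and
   a window start t with t + q <= M, take the mechanical word of irrational slope
   p/q + eps (eps tiny, eps M^2 < 1/2) whose intercept puts the line just below an
   integer at n = t.  Its factor of length M has at least b letters 1, and its unique
   window of length q containing p + 1 letters 1 is [t, t + q); this window determines
   p/q and t, so distinct triples give distinct factors.  Hence H M b is at least the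
   number of triples, i.e. the sum of M + 1 - q over the reduced fractions p/q above.

   Moebius inversion turns this sum into sum_d mu(d) W_d, where W_d sums the
   weights over pairs of multiples of d and equals (M - b) M^2 / (6 d^2) + O(M^2 / d);
   since sum_{d <= M} mu(d)/d^2 = 6/pi^2 + O(log M / M), the sum is
   (M - b) M^2 / pi^2 + O(M^2 log M), and log M = O(M^delta). *)

definition moebius :: "nat \<Rightarrow> int" where
  "moebius n = (if squarefree n then (-1) ^ card (prime_factors n) else 0)"

lemma abs_moebius_le_1: "\<bar>moebius n\<bar> \<le> 1"
  by (simp add: moebius_def)

lemma moebius_prime_times_multiple:
  assumes "prime p" "p dvd e"
  shows "moebius (p * e) = 0"
proof -
  have "p ^ 2 dvd p * e" using assms(2) by (auto simp: power2_eq_square)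
  hence "\<not> squarefree (p * e)"
    using assms(1) by (meson not_squarefreeI not_prime_unit)
  thus ?thesis by (simp add: moebius_def)
qed

lemma moebius_prime_times_coprime:
  assumes "prime p" "\<not> p dvd e" "e > 0"
  shows "moebius (p * e) = - moebius e"
proof -
  have cop: "coprime p e" using assms prime_imp_coprime by blast
  have sq: "squarefree (p * e) \<longleftrightarrow> squarefree e"
    using squarefree_mult_coprime[OF cop] squarefree_prime[OF assms(1)]
      squarefree_mono[of e "p * e"] by auto
  have "prime_factors (p * e) = insert p (prime_factors e)"
    using assms by (simp add: prime_factors_product prime_prime_factors)
  moreover have "p \<notin> prime_factors e" using assms(2) by (auto simp: in_prime_factors_iff)
  ultimately have "card (prime_factors (p * e)) = Suc (card (prime_factors e))" by simp
  thus ?thesis using sq by (simp add: moebius_def)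
qed

text \<open>The defining property of the Moebius function: its divisor sums vanish except at 1.
  Split the divisors of n = p * k according to divisibility by the prime p.\<close>
lemma moebius_divisor_sum:
  assumes "n > 0"
  shows "(\<Sum>d | d dvd n. moebius d) = (if n = 1 then 1 else 0)"
proof (cases "n = 1")
  case True thus ?thesis by (simp add: moebius_def)
next
  case False
  then obtain p where p: "prime p" "p dvd n" using assms by (metis prime_factor_nat)
  then obtain k where nk: "n = p * k" by blast
  have k0: "k > 0" using assms nk by auto
  have "d dvd k" if "d dvd p * k" "\<not> p dvd d" for d
    using that p by (metis coprime_commute coprime_dvd_mult_right_iff prime_imp_coprime)
  hence coprime_part: "{d. d dvd n \<and> \<not> p dvd d} = {e. e dvd k \<and> \<not> p dvd e}"
    using nk by auto
  have multiple_part: "(\<Sum>d | d dvd n \<and> p dvd d. moebius d) = (\<Sum>e | e dvd k. moebius (p * e))"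
    by (rule sum.reindex_bij_witness[of _ "\<lambda>e. p * e" "\<lambda>d. d div p"])
       (use nk p in \<open>auto simp: prime_gt_0_nat elim!: dvdE\<close>)
  have "(\<Sum>e | e dvd k. moebius (p * e)) = (\<Sum>e | e dvd k \<and> \<not> p dvd e. moebius (p * e))"
    by (rule sum.mono_neutral_right) (use k0 p moebius_prime_times_multiple in auto)
  also have "\<dots> = - (\<Sum>e | e dvd k \<and> \<not> p dvd e. moebius e)"
    unfolding sum_negf[symmetric]
    by (rule sum.cong) (use k0 in \<open>auto intro!: moebius_prime_times_coprime[OF p(1)] dest: dvd_pos_nat\<close>)
  finally have "(\<Sum>d | d dvd n \<and> p dvd d. moebius d) = - (\<Sum>d | d dvd n \<and> \<not> p dvd d. moebius d)"
    using multiple_part coprime_part by simp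
  moreover have "(\<Sum>d | d dvd n. moebius d)
      = (\<Sum>d | d dvd n \<and> p dvd d. moebius d) + (\<Sum>d | d dvd n \<and> \<not> p dvd d. moebius d)"
    using assms by (subst sum.union_disjoint[symmetric]) (auto intro: sum.cong)
  ultimately show ?thesis using False by simp
qed

definition zeta2_partial :: "nat \<Rightarrow> real" where
  "zeta2_partial n = (\<Sum>k=1..n. 1 / (real k)^2)"

lemma zeta2_partial_tendsto: "zeta2_partial \<longlonglongrightarrow> pi^2 / 6"
proof -
  have "zeta2_partial = (\<lambda>n. \<Sum>i<n. 1 / (real i + 1)^2)"
    unfolding zeta2_partial_def
    by (rule ext, rule sum.reindex_bij_witness[of _ Suc "\<lambda>k. k - 1"]) auto
  thus ?thesis
    using inverse_squares_sums unfolding sums_def by (simp add: add.commute)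
qed

lemma zeta2_partial_le: "zeta2_partial n \<le> pi^2 / 6"
proof (rule incseq_le[OF _ zeta2_partial_tendsto])
  show "incseq zeta2_partial"
    by (rule incseq_SucI) (simp add: zeta2_partial_def)
qed

text \<open>Telescoping against 1/(k-1) - 1/k: the partial sums grow by at most 1/k - 1/N
  between k and N.\<close>
lemma zeta2_partial_increment:
  assumes "1 \<le> k" "k \<le> N"
  shows "zeta2_partial N \<le> zeta2_partial k + 1 / real k - 1 / real N"
  using assms(2)
proof (induction N rule: dec_induct)
  case base thus ?case by simp
next
  case (step n)
  have n1: "real n \<ge> 1" using step assms(1) by simp
  have "1 / (real n + 1)^2 \<le> 1 / (real n * (real n + 1))"
    using n1 by (intro divide_left_mono) (auto simp: power2_eq_square intro!: mult_right_mono)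
  also have "\<dots> = 1 / real n - 1 / real (Suc n)"
    using n1 by (simp add: field_simps)
  finally show ?case
    using step.IH by (simp add: zeta2_partial_def add.commute)
qed

lemma zeta2_tail:
  assumes "k \<ge> 1"
  shows "pi^2 / 6 - zeta2_partial k \<le> 1 / real k"
proof -
  have "pi^2 / 6 \<le> zeta2_partial k + 1 / real k"
  proof (rule LIMSEQ_le_const2[OF zeta2_partial_tendsto], intro exI allI impI)
    fix N assume "k \<le> N"
    have "0 \<le> 1 / real N" by simp
    thus "zeta2_partial N \<le> zeta2_partial k + 1 / real k"
      using zeta2_partial_increment[OF assms \<open>k \<le> N\<close>] by linarith
  qed
  thus ?thesis by simp
qed

text \<open>Finite Moebius inversion of the partial zeta sums: grouping the terms
  mu(d) / (d n)^2 with d n = N \<le> M leaves only the divisor sums of mu.\<close>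
lemma moebius_zeta2_partial:
  assumes "M \<ge> 1"
  shows "(\<Sum>d=1..M. moebius d / (real d)^2 * zeta2_partial (M div d)) = 1"
proof -
  have "(\<Sum>d=1..M. moebius d / (real d)^2 * zeta2_partial (M div d))
      = (\<Sum>(d,n)\<in>Sigma {1..M} (\<lambda>d. {1..M div d}). moebius d / (real (d * n))^2)"
    by (simp add: zeta2_partial_def sum_distrib_left power_mult_distrib sum.Sigma)
  also have "\<dots> = (\<Sum>(N,d)\<in>Sigma {1..M} (\<lambda>N. {d. d dvd N}). moebius d / (real N)^2)"
  proof (rule sum.reindex_bij_witness[of _ "\<lambda>(N,d). (d, N div d)" "\<lambda>(d,n). (d * n, d)"])
    fix x assume "x \<in> Sigma {1..M} (\<lambda>d. {1..M div d})"
    then obtain d n where dn: "x = (d,n)" "1 \<le> d" "1 \<le> n" "n \<le> M div d" by auto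
    hence "d * n \<le> M" using less_eq_div_iff_mult_less_eq[of d n M] by (simp add: mult.commute)
    thus "(case (case x of (d, n) \<Rightarrow> (d * n, d)) of (N, d) \<Rightarrow> (d, N div d)) = x"
      and "(case x of (d, n) \<Rightarrow> (d * n, d)) \<in> Sigma {1..M} (\<lambda>N. {d. d dvd N})"
      and "(case (case x of (d, n) \<Rightarrow> (d * n, d)) of (N, d) \<Rightarrow> moebius d / (real N)\<^sup>2) =
           (case x of (d, n) \<Rightarrow> moebius d / (real (d * n))\<^sup>2)"
      using dn by auto
  next
    fix y assume "y \<in> Sigma {1..M} (\<lambda>N. {d. d dvd N})"
    then obtain N d where Nd: "y = (N,d)" "1 \<le> N" "N \<le> M" "d dvd N" by auto
    then obtain n where n: "N = d * n" by blast
    hence "d \<ge> 1" "n \<ge> 1" "d * n \<le> M" using Nd by (auto intro: Nat.gr0I)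
    moreover have "d \<le> d * n" using \<open>n \<ge> 1\<close> by simp
    ultimately have "d \<le> M" "n \<le> M div d"
      by (linarith, simp add: less_eq_div_iff_mult_less_eq mult.commute)
    thus "(case (case y of (N, d) \<Rightarrow> (d, N div d)) of (d, n) \<Rightarrow> (d * n, d)) = y"
      and "(case y of (N, d) \<Rightarrow> (d, N div d)) \<in> Sigma {1..M} (\<lambda>d. {1..M div d})"
      using Nd n \<open>d \<ge> 1\<close> \<open>n \<ge> 1\<close> by auto
  qed
  also have "\<dots> = (\<Sum>N=1..M. \<Sum>d | d dvd N. moebius d / (real N)^2)"
    by (rule sum.Sigma[symmetric]) auto
  also have "\<dots> = (\<Sum>N=1..M. of_int (\<Sum>d | d dvd N. moebius d) / (real N)^2)"
    by (simp add: sum_divide_distrib)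
  also have "\<dots> = (\<Sum>N=1..M. if N = 1 then 1 else 0)"
    by (rule sum.cong) (auto simp: moebius_divisor_sum)
  finally show ?thesis using assms by simp
qed

lemma div_lower_bound:
  assumes "1 \<le> d" "d \<le> (M::nat)"
  shows "real M \<le> 2 * real d * real (M div d)"
proof -
  have "M = d * (M div d) + M mod d" "M mod d < d" "d \<le> d * (M div d)"
    using assms by (simp_all add: Suc_le_eq div_greater_zero_iff)
  hence "M \<le> 2 * d * (M div d)" by linarith
  thus ?thesis by (metis of_nat_le_iff of_nat_mult of_nat_numeral)
qed

text \<open>The truncated Dirichlet series of mu at 2 is 6 / pi^2 up to an error O(log M / M):
  replacing zeta2_partial (M div d) by pi^2 / 6 costs at most 1 / (M div d) \<le> 2 d / M
  per term.\<close>
lemma moebius_series_lower: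
  assumes M: "M \<ge> 1"
  shows "pi^2 / 6 * (\<Sum>d=1..M. moebius d / (real d)^2) \<ge> 1 - 2 * harm M / real M"
proof -
  have "- (2 / real M) * (1 / real d) \<le> moebius d / (real d)^2 * (pi^2 / 6 - zeta2_partial (M div d))"
    if d: "d \<in> {1..M}" for d
  proof -
    define e where "e = pi^2 / 6 - zeta2_partial (M div d)"
    have k1: "M div d \<ge> 1" using d by (simp add: Suc_le_eq div_greater_zero_iff)
    have "real M \<le> 2 * real d * real (M div d)" using d div_lower_bound by auto
    hence "1 / real (M div d) \<le> 2 * real d / real M" using k1 M by (simp add: field_simps)
    hence e_bounds: "0 \<le> e" "e \<le> 2 * real d / real M"
      using zeta2_partial_le[of "M div d"] zeta2_tail[OF k1] unfolding e_def by linarith+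
    have "\<bar>real_of_int (moebius d)\<bar> \<le> 1" using abs_moebius_le_1[of d] by linarith
    hence "\<bar>moebius d * e\<bar> \<le> e"
      using e_bounds unfolding abs_mult by (simp add: mult_left_le_one_le)
    hence "\<bar>moebius d * e\<bar> \<le> 2 * real d / real M" using e_bounds by linarith
    hence "- (2 * real d / real M) / (real d)^2 \<le> moebius d * e / (real d)^2"
      by (intro divide_right_mono) auto
    moreover have "- (2 * real d / real M) / (real d)^2 = - (2 / real M) * (1 / real d)"
      using d by (simp add: field_simps power2_eq_square)
    ultimately show ?thesis by (simp add: e_def)
  qed
  hence "(\<Sum>d=1..M. - (2 / real M) * (1 / real d))
      \<le> (\<Sum>d=1..M. moebius d / (real d)^2 * (pi^2 / 6 - zeta2_partial (M div d)))"
    by (rule sum_mono)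
  also have "\<dots> = (\<Sum>d=1..M. pi^2 / 6 * (moebius d / (real d)^2))
                   - (\<Sum>d=1..M. moebius d / (real d)^2 * zeta2_partial (M div d))"
    by (simp only: sum_subtractf[symmetric] right_diff_distrib mult.commute)
  also have "\<dots> = pi^2 / 6 * (\<Sum>d=1..M. moebius d / (real d)^2) - 1"
    by (simp only: moebius_zeta2_partial[OF M] sum_distrib_left)
  finally have "- (2 / real M) * (\<Sum>d=1..M. 1 / real d) \<le> \<dots>"
    by (simp only: sum_distrib_left)
  moreover have "(\<Sum>d=1..M. 1 / real d) = harm M" by (simp add: harm_def divide_inverse)
  ultimately show ?thesis by simp
qed

lemma scaled_moebius_series_lower:
  assumes M: "M \<ge> 1" and A: "0 \<le> A" "A \<le> (real M)^3"
  shows "A / pi^2 - (real M)^2 * harm M \<le> A / 6 * (\<Sum>d=1..M. moebius d / (real d)^2)"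
proof -
  have "3^2 < pi^2" using pi_gt3 by (intro power_strict_mono) auto
  hence pi2: "2 < pi^2" by simp
  have "A / pi^2 * (1 - 2 * harm M / real M) \<le> A / pi^2 * (pi^2 / 6 * (\<Sum>d=1..M. moebius d / (real d)^2))"
    using moebius_series_lower[OF M] A pi2 by (intro mult_left_mono) auto
  also have "\<dots> = A / 6 * (\<Sum>d=1..M. moebius d / (real d)^2)" using pi2 by (simp add: field_simps)
  finally have "A / pi^2 - A * harm M / real M * (2 / pi^2) \<le> \<dots>" by (simp add: algebra_simps)
  moreover have "A * harm M / real M * (2 / pi^2) \<le> A * harm M / real M"
    using A pi2 harm_nonneg[of M] by (intro mult_right_le_one_le divide_nonneg_nonneg mult_nonneg_nonneg) auto
  moreover have "A * harm M / real M \<le> (real M)^2 * harm M"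
    using A M harm_nonneg[of M] by (simp add: field_simps power2_eq_square power3_eq_cube mult_right_mono)
  ultimately show ?thesis by linarith
qed

lemma quadratic_weight_closed_form:
  "(\<Sum>q=1..m. (x - d * real q) * real q)
     = x * real m * (real m + 1) / 2 - d * real m * (real m + 1) * (2 * real m + 1) / 6"
  by (induction m) (simp_all add: field_simps power2_eq_square)

lemma quadratic_weight_estimate:
  fixes d m r :: real
  assumes d: "d \<ge> 1" and r: "0 \<le> r" "r + 1 \<le> d" and m: "m \<ge> 1"
  defines "M \<equiv> d * m + r"
  shows "\<bar>(M + 1) * m * (m + 1) / 2 - d * m * (m + 1) * (2 * m + 1) / 6 - M^3 / (6 * d^2)\<bar>
           \<le> M^2 / d"
proof -
  define P where "P = m^2 / 2 + (r + 1) * m / 2"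
  define N where "N = d * m / 6 + m * r^2 / (2 * d) + r^3 / (6 * d^2)"
  have ident: "(M + 1) * m * (m + 1) / 2 - d * m * (m + 1) * (2 * m + 1) / 6 - M^3 / (6 * d^2) = P - N"
    unfolding M_def P_def N_def using d by (simp add: field_simps power2_eq_square power3_eq_cube)
  have dm: "d * m \<le> M" using r unfolding M_def by simp
  have "d \<le> d * m" using d m by simp
  hence dM: "d \<le> M" using dm by linarith
  have M_le: "M \<le> M^2 / d" using dM d by (simp add: field_simps power2_eq_square)
  have "m^2 \<le> M^2 / d"
  proof -
    have "(d * m)^2 \<le> M^2" using dm d m by (intro power_mono) auto
    hence "m^2 \<le> M^2 / d^2" using d by (simp add: field_simps power_mult_distrib)
    also have "\<dots> \<le> M^2 / d" using d by (intro divide_left_mono) (auto simp: power2_eq_square)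
    finally show ?thesis .
  qed
  moreover have "(r + 1) * m \<le> d * m" using r m by (intro mult_right_mono) auto
  ultimately have P: "0 \<le> P" "P \<le> M^2 / d"
    unfolding P_def using r m dm M_le by (simp, linarith)
  have "m * r^2 / (2 * d) \<le> M / 2"
  proof -
    have "m * r^2 \<le> m * d^2" using r m by (intro mult_left_mono power_mono) auto
    also have "\<dots> = (d * m) * d" by (simp add: power2_eq_square)
    also have "\<dots> \<le> M * d" using dm d by (intro mult_right_mono) auto
    finally show ?thesis using d by (simp add: field_simps)
  qed
  moreover have "r^3 / (6 * d^2) \<le> M / 6"
  proof -
    have "r^3 \<le> d^3" using r by (intro power_mono) auto
    also have "\<dots> = d * d^2" by (simp add: power2_eq_square power3_eq_cube)
    also have "\<dots> \<le> M * d^2" using dM by (intro mult_right_mono) auto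
    finally show ?thesis using d by (simp add: field_simps)
  qed
  moreover have "0 \<le> N" unfolding N_def using r m d by simp
  ultimately have N: "0 \<le> N" "N \<le> M^2 / d" unfolding N_def using dm M_le by simp_all
  show ?thesis unfolding ident using P N by linarith
qed

text \<open>The pairs (p, q) with b / M \<le> p / q < 1 and q \<le> M, i.e. the candidate slopes of
  factors of length M containing at least b letters 1.\<close>
definition farey_pairs :: "nat \<Rightarrow> nat \<Rightarrow> (nat \<times> nat) set" where
  "farey_pairs M b = {(p, q). 1 \<le> p \<and> p < q \<and> q \<le> M \<and> b * q \<le> M * p}"

lemma finite_farey_pairs: "finite (farey_pairs M b)"
  by (rule finite_subset[of _ "{0..M} \<times> {0..M}"]) (auto simp: farey_pairs_def)

definition numerator_count :: "nat \<Rightarrow> nat \<Rightarrow> nat \<Rightarrow> nat" where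
  "numerator_count M b q = card {p. 1 \<le> p \<and> p < q \<and> b * q \<le> M * p}"

text \<open>The admissible numerators form the interval [max 1 (bq/M), q), of length
  (1 - b/M) q up to an error less than 1.\<close>
lemma numerator_count_bounds:
  fixes M b q :: nat
  assumes M: "M \<ge> 1" and b: "b \<le> M" and q: "q \<ge> 1"
  shows "(real M - real b) / real M * real q - 1 \<le> real (numerator_count M b q)"
    and "real (numerator_count M b q) \<le> (real M - real b) / real M * real q"
proof -
  define x where "x = real b * real q / real M"
  define L where "L = nat \<lceil>x\<rceil>"
  have x0: "x \<ge> 0" unfolding x_def by simp
  have L: "x \<le> real L" "real L < x + 1"
    unfolding L_def using x0 ceiling_correct[of x] by linarith+
  have admissible_iff: "b * q \<le> M * p \<longleftrightarrow> L \<le> p" for p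
  proof -
    have "b * q \<le> M * p \<longleftrightarrow> real b * real q \<le> real M * real p"
      by (metis of_nat_le_iff of_nat_mult)
    also have "\<dots> \<longleftrightarrow> x \<le> real p" unfolding x_def using M
      by (simp add: pos_divide_le_eq mult.commute)
    also have "\<dots> \<longleftrightarrow> L \<le> p" unfolding L_def by (simp add: ceiling_le_iff nat_le_iff)
    finally show ?thesis .
  qed
  have "{p. 1 \<le> p \<and> p < q \<and> b * q \<le> M * p} = {max 1 L..<q}"
    by (auto simp: admissible_iff)
  moreover have "L \<le> q" using admissible_iff[of q] b by simp
  ultimately have count: "real (numerator_count M b q) = real q - real (max 1 L)"
    unfolding numerator_count_def using q by (simp add: of_nat_diff)
  have "real q - x = (real M - real b) / real M * real q"
    unfolding x_def using M by (simp add: field_simps)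
  moreover have "real L \<le> real (max 1 L)" "real (max 1 L) \<le> x + 1"
    using L x0 by (auto simp: max_def)
  ultimately show "(real M - real b) / real M * real q - 1 \<le> real (numerator_count M b q)"
    and "real (numerator_count M b q) \<le> (real M - real b) / real M * real q"
    using count L by linarith+
qed

definition multiple_weight :: "nat \<Rightarrow> nat \<Rightarrow> nat \<Rightarrow> real" where
  "multiple_weight M b d =
     (\<Sum>x \<in> {x \<in> farey_pairs M b. d dvd fst x \<and> d dvd snd x}. real M + 1 - real (snd x))"

text \<open>Writing (p, q) = (d p', d q'), the condition b q \<le> M p becomes b q' \<le> M p',
  so the pairs are counted by denominator q' \<le> M div d.\<close>
lemma multiple_weight_eq:
  assumes "d \<ge> 1"
  shows "multiple_weight M b d
           = (\<Sum>q=1..M div d. (real M + 1 - real d * real q) * real (numerator_count M b q))"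
proof -
  define num where "num q = {p. 1 \<le> p \<and> p < q \<and> b * q \<le> M * p}" for q
  have "finite (num q)" for q by (rule finite_subset[of _ "{..<q}"]) (auto simp: num_def)
  hence "(\<Sum>q=1..M div d. (real M + 1 - real d * real q) * real (numerator_count M b q))
      = (\<Sum>(q, p) \<in> Sigma {1..M div d} num. real M + 1 - real d * real q)"
    by (simp add: sum.Sigma[symmetric] numerator_count_def num_def mult.commute)
  also have "\<dots> = multiple_weight M b d"
    unfolding multiple_weight_def
  proof (rule sum.reindex_bij_witness[of _ "\<lambda>(p, q). (q div d, p div d)" "\<lambda>(q, p). (d * p, d * q)"])
    fix y assume "y \<in> Sigma {1..M div d} num"
    then obtain q p where y: "y = (q, p)" "1 \<le> q" "q \<le> M div d" "1 \<le> p" "p < q"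
      "b * q \<le> M * p" by (auto simp: num_def)
    have "d * q \<le> M" using y assms by (simp add: less_eq_div_iff_mult_less_eq mult.commute)
    moreover have "b * (d * q) \<le> M * (d * p)"
      using mult_le_mono2[OF y(6), of d] by (simp add: algebra_simps)
    ultimately show "(case (case y of (q, p) \<Rightarrow> (d * p, d * q)) of (p, q) \<Rightarrow> (q div d, p div d)) = y"
      and "(case y of (q, p) \<Rightarrow> (d * p, d * q))
             \<in> {x \<in> farey_pairs M b. d dvd fst x \<and> d dvd snd x}"
      and "real M + 1 - real (snd (case y of (q, p) \<Rightarrow> (d * p, d * q)))
             = (case y of (q, p) \<Rightarrow> real M + 1 - real d * real q)"
      using y assms by (auto simp: farey_pairs_def)
  next
    fix x assume "x \<in> {x \<in> farey_pairs M b. d dvd fst x \<and> d dvd snd x}"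
    then obtain p q where x: "x = (d * p, d * q)" "1 \<le> d * p" "d * p < d * q" "d * q \<le> M"
      "b * (d * q) \<le> M * (d * p)" by (auto simp: farey_pairs_def elim!: dvdE)
    have "b * q \<le> M * p" using x(5) assms by (simp add: algebra_simps)
    moreover have "q \<le> M div d" using x(4) assms by (simp add: less_eq_div_iff_mult_less_eq mult.commute)
    ultimately show "(case (case x of (p, q) \<Rightarrow> (q div d, p div d)) of (q, p) \<Rightarrow> (d * p, d * q)) = x"
      and "(case x of (p, q) \<Rightarrow> (q div d, p div d)) \<in> Sigma {1..M div d} num"
      using x assms by (auto simp: num_def)
  qed
  finally show ?thesis ..
qed

lemma window_weight_nonneg:
  assumes "q \<le> M div d"
  shows "0 \<le> real M + 1 - real d * real q"
proof -
  have "d * q \<le> M"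
    using assms by (cases "d = 0") (simp_all add: less_eq_div_iff_mult_less_eq mult.commute)
  hence "real d * real q \<le> real M" by (metis of_nat_le_iff of_nat_mult)
  thus ?thesis by simp
qed

lemma window_weight_sums:
  assumes d: "1 \<le> d" "d \<le> M"
  shows "0 \<le> (\<Sum>q=1..M div d. real M + 1 - real d * real q)"
    and "(\<Sum>q=1..M div d. real M + 1 - real d * real q) \<le> 2 * (real M)^2 / real d"
    and "\<bar>(\<Sum>q=1..M div d. (real M + 1 - real d * real q) * real q) - (real M)^3 / (6 * (real d)^2)\<bar>
           \<le> (real M)^2 / real d"
proof -
  define m where "m = M div d"
  have Mdec: "real M = real d * real m + real (M mod d)"
    unfolding m_def by (metis of_nat_add of_nat_mult div_mult_mod_eq mult.commute)
  have rd: "real (M mod d) + 1 \<le> real d"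
    using d by (metis Suc_leI le0 less_le_trans mod_less_divisor of_nat_1 of_nat_add of_nat_le_iff
        plus_1_eq_Suc add.commute zero_less_one)
  have m1: "real m \<ge> 1" unfolding m_def using d by (simp add: Suc_le_eq div_greater_zero_iff)
  show "0 \<le> (\<Sum>q=1..M div d. real M + 1 - real d * real q)"
    by (rule sum_nonneg) (use window_weight_nonneg in auto)
  have "(\<Sum>q=1..m. real M + 1 - real d * real q) \<le> real m * (real M + 1)"
    using sum_mono[of "{1..m}" "\<lambda>q. real M + 1 - real d * real q" "\<lambda>_. real M + 1"] by simp
  also have "\<dots> \<le> (real M / real d) * (2 * real M)"
    using Mdec d by (intro mult_mono) (auto simp: field_simps)
  also have "\<dots> = 2 * (real M)^2 / real d" by (simp add: power2_eq_square)
  finally show "(\<Sum>q=1..M div d. real M + 1 - real d * real q) \<le> 2 * (real M)^2 / real d"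
    unfolding m_def .
  have "(\<Sum>q=1..m. (real M + 1 - real d * real q) * real q)
      = (real M + 1) * real m * (real m + 1) / 2 - real d * real m * (real m + 1) * (2 * real m + 1) / 6"
    by (rule quadratic_weight_closed_form)
  thus "\<bar>(\<Sum>q=1..M div d. (real M + 1 - real d * real q) * real q) - (real M)^3 / (6 * (real d)^2)\<bar>
           \<le> (real M)^2 / real d"
    using quadratic_weight_estimate[of "real d" "real (M mod d)" "real m"] d rd m1 Mdec
    unfolding m_def by simp
qed

text \<open>Main term of multiple_weight: replacing numerator_count M b q by (1 - b/M) q costs at
  most the plain sum of the weights.\<close>
lemma multiple_weight_estimate:
  fixes M b d :: nat
  assumes d: "1 \<le> d" "d \<le> M" and b: "b \<le> M"
  shows "\<bar>multiple_weight M b d - (real M - real b) * (real M)^2 / (6 * (real d)^2)\<bar>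
           \<le> 3 * (real M)^2 / real d"
proof -
  define B where "B = (real M - real b) / real M"
  define weight where "weight q = real M + 1 - real d * real q" for q
  define S1 where "S1 = (\<Sum>q=1..M div d. weight q * real q)"
  define S0 where "S0 = (\<Sum>q=1..M div d. weight q)"
  define main where "main = (real M - real b) * (real M)^2 / (6 * (real d)^2)"
  have M: "real M \<ge> 1" using d by simp
  have B: "0 \<le> B" "B \<le> 1" unfolding B_def using b M by (auto simp: field_simps)
  have W: "multiple_weight M b d = (\<Sum>q=1..M div d. weight q * real (numerator_count M b q))"
    unfolding multiple_weight_eq[OF d(1)] weight_def ..
  have "multiple_weight M b d \<le> (\<Sum>q=1..M div d. weight q * (B * real q))"
    unfolding W weight_def using numerator_count_bounds(2)[OF _ b] window_weight_nonneg d
    by (intro sum_mono mult_left_mono) (auto simp: B_def)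
  hence upper: "multiple_weight M b d \<le> B * S1"
    unfolding S1_def by (simp add: sum_distrib_left algebra_simps)
  have "(\<Sum>q=1..M div d. weight q * (B * real q - 1)) \<le> multiple_weight M b d"
    unfolding W weight_def using numerator_count_bounds(1)[OF _ b] window_weight_nonneg d
    by (intro sum_mono mult_left_mono) (auto simp: B_def)
  hence lower: "B * S1 - S0 \<le> multiple_weight M b d"
    unfolding S1_def S0_def by (simp add: sum_distrib_left sum_subtractf algebra_simps)
  have "B * \<bar>S1 - (real M)^3 / (6 * (real d)^2)\<bar> \<le> (real M)^2 / real d"
    using window_weight_sums(3)[OF d] B unfolding S1_def weight_def
    by (meson abs_ge_zero mult_left_le_one_le order_trans)
  moreover have "\<bar>B * S1 - B * X\<bar> = B * \<bar>S1 - X\<bar>" for X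
    using B by (metis abs_mult abs_of_nonneg right_diff_distrib)
  moreover have "B * ((real M)^3 / (6 * (real d)^2)) = (B * real M) * (real M)^2 / (6 * (real d)^2)"
    by (simp add: power2_eq_square power3_eq_cube)
  moreover have "B * real M = real M - real b" unfolding B_def using M by simp
  ultimately have "\<bar>B * S1 - main\<bar> \<le> (real M)^2 / real d" unfolding main_def by metis
  thus ?thesis
    unfolding main_def[symmetric] using upper lower window_weight_sums(1,2)[OF d]
    unfolding S0_def weight_def abs_le_iff by linarith
qed

text \<open>The divisor sum of mu over common divisors detects coprimality (all of them are \<le> M).\<close>
lemma moebius_coprime_indicator:
  fixes p q M :: nat
  assumes "1 \<le> p" "1 \<le> q" "q \<le> M"
  shows "(\<Sum>d \<in> {d \<in> {1..M}. d dvd p \<and> d dvd q}. moebius d) = (if coprime p q then 1 else 0)"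
proof -
  have g: "gcd p q > 0" "gcd p q \<le> M" using assms by (auto intro: order_trans[OF gcd_le2_nat])
  have "d \<in> {1..M} \<and> d dvd p \<and> d dvd q \<longleftrightarrow> d dvd gcd p q" for d
    using g dvd_imp_le[of d "gcd p q"] by (auto intro: Nat.gr0I)
  hence "{d \<in> {1..M}. d dvd p \<and> d dvd q} = {d. d dvd gcd p q}" by blast
  thus ?thesis using moebius_divisor_sum[OF \<open>gcd p q > 0\<close>] by (simp add: coprime_iff_gcd_eq_1)
qed

lemma coprime_sum_moebius:
  fixes w :: "nat \<times> nat \<Rightarrow> real"
  assumes "finite S" and S: "\<And>p q. (p, q) \<in> S \<Longrightarrow> 1 \<le> p \<and> 1 \<le> q \<and> q \<le> M"
  shows "(\<Sum>x \<in> S. if coprime (fst x) (snd x) then w x else 0)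
           = (\<Sum>d=1..M. moebius d * (\<Sum>x \<in> {x \<in> S. d dvd fst x \<and> d dvd snd x}. w x))"
proof -
  have "(\<Sum>x \<in> S. if coprime (fst x) (snd x) then w x else 0)
      = (\<Sum>x \<in> S. \<Sum>d \<in> {d \<in> {1..M}. d dvd fst x \<and> d dvd snd x}. moebius d * w x)"
  proof (rule sum.cong[OF refl])
    fix x assume "x \<in> S"
    then obtain p q where "x = (p, q)" "1 \<le> p" "1 \<le> q" "q \<le> M" using S by (cases x) auto
    hence "(\<Sum>d \<in> {d \<in> {1..M}. d dvd fst x \<and> d dvd snd x}. moebius d * w x)
        = of_int (\<Sum>d \<in> {d \<in> {1..M}. d dvd p \<and> d dvd q}. moebius d) * w x"
      by (simp only: of_int_sum sum_distrib_right fst_conv snd_conv)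
    thus "(if coprime (fst x) (snd x) then w x else 0)
        = (\<Sum>d \<in> {d \<in> {1..M}. d dvd fst x \<and> d dvd snd x}. moebius d * w x)"
      using \<open>x = (p, q)\<close> moebius_coprime_indicator[OF \<open>1 \<le> p\<close> \<open>1 \<le> q\<close> \<open>q \<le> M\<close>]
      by (simp del: of_int_sum)
  qed
  also have "\<dots> = (\<Sum>d=1..M. \<Sum>x \<in> {x \<in> S. d dvd fst x \<and> d dvd snd x}. moebius d * w x)"
    by (rule sum.swap_restrict) (simp_all add: assms(1))
  finally show ?thesis by (simp add: sum_distrib_left)
qed

text \<open>The total weight of the reduced fractions in farey_pairs M b: Moebius inversion,
  the estimate of multiple_weight and the value 6 / pi^2 of the Moebius series.\<close>
lemma coprime_farey_weight_lower:
  assumes M: "M \<ge> 1" and b: "b \<le> M"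
  shows "(\<Sum>x \<in> farey_pairs M b. if coprime (fst x) (snd x) then real M + 1 - real (snd x) else 0)
           \<ge> (real M - real b) * (real M)^2 / pi^2 - 4 * (real M)^2 * harm M"
proof -
  define A where "A = (real M - real b) * (real M)^2"
  define G where "G = (\<Sum>d=1..M. moebius d / (real d)^2)"
  have A: "0 \<le> A" unfolding A_def using b by simp
  have "(\<Sum>d=1..M. moebius d * (A / (6 * (real d)^2))) = A / 6 * G"
    unfolding G_def sum_distrib_left by (rule sum.cong) (simp_all add: field_simps)
  moreover have "(\<Sum>d=1..M. 3 * (real M)^2 / real d) = 3 * (real M)^2 * harm M"
    unfolding harm_def sum_distrib_left by (simp add: divide_inverse)
  ultimately have "A / 6 * G - 3 * (real M)^2 * harm M
      = (\<Sum>d=1..M. moebius d * (A / (6 * (real d)^2)) - 3 * (real M)^2 / real d)"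
    by (simp only: sum_subtractf)
  also have "\<dots> \<le> (\<Sum>d=1..M. moebius d * multiple_weight M b d)"
  proof (rule sum_mono)
    fix d assume d: "d \<in> {1..M}"
    have "\<bar>moebius d * (multiple_weight M b d - A / (6 * (real d)^2))\<bar> \<le> 1 * (3 * (real M)^2 / real d)"
      unfolding abs_mult A_def using multiple_weight_estimate[of d M b] abs_moebius_le_1[of d] d b
      by (intro mult_mono) auto
    thus "moebius d * (A / (6 * (real d)^2)) - 3 * (real M)^2 / real d \<le> moebius d * multiple_weight M b d"
      by (simp add: right_diff_distrib abs_le_iff)
  qed
  also have "\<dots> = (\<Sum>x \<in> farey_pairs M b. if coprime (fst x) (snd x) then real M + 1 - real (snd x) else 0)"
    unfolding multiple_weight_def
    by (rule coprime_sum_moebius[symmetric]) (rule finite_farey_pairs, auto simp: farey_pairs_def)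
  finally have main: "A / 6 * G - 3 * (real M)^2 * harm M \<le> \<dots>" .
  have "A \<le> real M * (real M)^2" unfolding A_def using b by (intro mult_right_mono) auto
  hence "A \<le> (real M)^3" by (simp add: power2_eq_square power3_eq_cube)
  thus ?thesis
    using main scaled_moebius_series_lower[OF M A] unfolding A_def G_def by linarith
qed

text \<open>Integer parts along the line n \<alpha> + \<beta>; their differences are the letters of the
  lower mechanical word of slope \<alpha> and intercept \<beta>.\<close>
definition floor_line :: "real \<Rightarrow> real \<Rightarrow> int \<Rightarrow> int" where
  "floor_line \<alpha> \<beta> n = \<lfloor>of_int n * \<alpha> + \<beta>\<rfloor>"

definition mechanical_factor :: "real \<Rightarrow> real \<Rightarrow> nat \<Rightarrow> int list" where
  "mechanical_factor \<alpha> \<beta> M = map (\<lambda>i. floor_line \<alpha> \<beta> (int i + 1) - floor_line \<alpha> \<beta> (int i)) [0..<M]"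

lemma length_mechanical_factor [simp]: "length (mechanical_factor \<alpha> \<beta> M) = M"
  by (simp add: mechanical_factor_def)

lemma mechanical_factor_sturmian:
  assumes "0 < \<alpha>" "\<alpha> < 1" "\<alpha> \<notin> \<rat>" "0 \<le> \<beta>" "\<beta> < 1"
  shows "sturmian_factor (mechanical_factor \<alpha> \<beta> M)"
proof -
  define u where "u n = \<lfloor>(of_int n + 1) * \<alpha> + \<beta>\<rfloor> - \<lfloor>of_int n * \<alpha> + \<beta>\<rfloor>" for n :: int
  have "sturmian_word u" unfolding sturmian_word_def u_def using assms by blast
  moreover have "mechanical_factor \<alpha> \<beta> M = map (\<lambda>i. u (0 + int i)) [0..<M]"
    unfolding mechanical_factor_def u_def floor_line_def by simp
  ultimately show ?thesis unfolding sturmian_factor_def length_mechanical_factor by blast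
qed

text \<open>Consecutive values of a floor or ceiling of a line of slope in (0, 1) differ by 0 or 1,
  so Sturmian words and factors are words over {0, 1}.\<close>
lemma sturmian_letters:
  assumes "sturmian_word u"
  shows "u n \<in> {0, 1}"
proof -
  obtain \<alpha> \<beta> :: real where \<alpha>: "0 < \<alpha>" "\<alpha> < 1" and
    u: "(\<forall>n. u n = \<lfloor>(of_int n + 1) * \<alpha> + \<beta>\<rfloor> - \<lfloor>of_int n * \<alpha> + \<beta>\<rfloor>) \<or>
        (\<forall>n. u n = \<lceil>(of_int n + 1) * \<alpha> + \<beta>\<rceil> - \<lceil>of_int n * \<alpha> + \<beta>\<rceil>)"
    using assms unfolding sturmian_word_def by blast
  define x where "x = of_int n * \<alpha> + \<beta>"
  have "(of_int n + 1) * \<alpha> + \<beta> = x + \<alpha>" unfolding x_def by (simp add: algebra_simps)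
  hence "u n = \<lfloor>x + \<alpha>\<rfloor> - \<lfloor>x\<rfloor> \<or> u n = \<lceil>x + \<alpha>\<rceil> - \<lceil>x\<rceil>"
    using u unfolding x_def by metis
  moreover have "\<lfloor>x\<rfloor> \<le> \<lfloor>x + \<alpha>\<rfloor>" "\<lfloor>x + \<alpha>\<rfloor> \<le> \<lfloor>x + 1\<rfloor>"
    using \<alpha> by (intro floor_mono; simp)+
  moreover have "\<lceil>x\<rceil> \<le> \<lceil>x + \<alpha>\<rceil>" "\<lceil>x + \<alpha>\<rceil> \<le> \<lceil>x + 1\<rceil>"
    using \<alpha> by (intro ceiling_mono; simp)+
  ultimately show ?thesis by (auto simp: one_add_floor[symmetric])
qed

lemma sturmian_factor_letters:
  assumes "sturmian_factor w"
  shows "set w \<subseteq> {0, 1}"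
proof -
  obtain u k where "sturmian_word u" "w = map (\<lambda>i. u (k + int i)) [0..<length w]"
    using assms unfolding sturmian_factor_def by blast
  thus ?thesis using sturmian_letters by (metis (no_types, lifting) ex_map_conv subsetI)
qed

text \<open>Over {0, 1} the number of letters 1 is the sum of the letters; for a mechanical factor
  the sum telescopes.\<close>
lemma count_ones_eq_sum_list:
  "set w \<subseteq> {0, 1} \<Longrightarrow> int (length (filter (\<lambda>x. x = 1) w)) = sum_list w"
  by (induction w) auto

lemma sum_list_mechanical_factor:
  "sum_list (mechanical_factor \<alpha> \<beta> M) = floor_line \<alpha> \<beta> (int M) - floor_line \<alpha> \<beta> 0"
  by (induction M) (simp_all add: mechanical_factor_def add.commute)

lemma mechanical_factor_eq_windows:
  assumes eq: "mechanical_factor \<alpha> \<beta> M = mechanical_factor \<alpha>' \<beta>' M" and "i \<le> M" "j \<le> M"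
  shows "floor_line \<alpha> \<beta> (int j) - floor_line \<alpha> \<beta> (int i)
           = floor_line \<alpha>' \<beta>' (int j) - floor_line \<alpha>' \<beta>' (int i)"
proof -
  have prefix: "floor_line \<alpha> \<beta> (int k) - floor_line \<alpha> \<beta> 0
      = floor_line \<alpha>' \<beta>' (int k) - floor_line \<alpha>' \<beta>' 0" if "k \<le> M" for k
    using that
  proof (induction k)
    case (Suc k)
    have "mechanical_factor \<alpha> \<beta> M ! k = mechanical_factor \<alpha>' \<beta>' M ! k" using eq by simp
    thus ?case using Suc by (simp add: mechanical_factor_def add.commute)
  qed simp
  show ?thesis using prefix[OF assms(2)] prefix[OF assms(3)] by linarith
qed

lemma heavy_window_slope:
  assumes "floor_line \<alpha> \<beta> (i + int q) - floor_line \<alpha> \<beta> i = int p + 1"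
  shows "real p < real q * \<alpha>"
proof -
  have "real_of_int (floor_line \<alpha> \<beta> (i + int q)) \<le> of_int (i + int q) * \<alpha> + \<beta>"
    "of_int i * \<alpha> + \<beta> - 1 < real_of_int (floor_line \<alpha> \<beta> i)"
    unfolding floor_line_def by linarith+
  moreover have "real_of_int (floor_line \<alpha> \<beta> (i + int q)) - real_of_int (floor_line \<alpha> \<beta> i) = real p + 1"
    using assms by (metis of_int_1 of_int_add of_int_diff of_int_of_nat_eq)
  ultimately show ?thesis by (simp add: algebra_simps)
qed

definition farey_slope :: "real \<Rightarrow> nat \<Rightarrow> nat \<Rightarrow> real" where
  "farey_slope \<epsilon> p q = real p / real q + \<epsilon>"

lemma q_farey_slope: "q \<ge> 1 \<Longrightarrow> real q * farey_slope \<epsilon> p q = real p + real q * \<epsilon>"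
  unfolding farey_slope_def by (simp add: field_simps)

lemma coprime_integer_relation:
  fixes j n :: int
  assumes "coprime p q" "1 \<le> q" "int q * n = j * int p"
  shows "\<exists>m. j = int q * m \<and> n = m * int p"
proof -
  have "coprime (int q) (int p)" using assms(1) by (simp add: coprime_commute)
  hence "int q dvd j" using assms(3) by (metis coprime_dvd_mult_left_iff dvd_triv_left)
  then obtain m where "j = int q * m" by blast
  moreover from this have "n = m * int p" using assms(2,3) by simp
  ultimately show ?thesis by blast
qed

lemma farey_slope_multiple_far_from_integers:
  fixes j n :: int
  assumes cop: "coprime p q" and q: "1 \<le> q" "q \<le> M" and \<epsilon>: "0 < \<epsilon>" "\<epsilon> * (real M)^2 < 1/2"
    and j: "\<bar>j\<bar> \<le> int M"
    and near: "j * farey_slope \<epsilon> p q - real q * \<epsilon> / 2 < n" "n \<le> j * farey_slope \<epsilon> p q + real q * \<epsilon> / 2"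
  shows "j = 0"
proof -
  have jqa: "real q * (j * farey_slope \<epsilon> p q) = j * real p + j * (real q * \<epsilon>)"
    using q_farey_slope[OF q(1)] by (simp add: algebra_simps)
  have M\<epsilon>: "real M * (real M * \<epsilon>) < 1/2" using \<epsilon>(2) by (simp add: power2_eq_square mult_ac)
  have "\<bar>j * (real q * \<epsilon>)\<bar> \<le> real M * (real M * \<epsilon>)"
    using j q \<epsilon> by (auto simp: abs_mult intro!: mult_mono)
  hence jq\<epsilon>: "\<bar>j * (real q * \<epsilon>)\<bar> < 1/2" using M\<epsilon> by linarith
  have "real q * (real q * \<epsilon>) \<le> real M * (real M * \<epsilon>)"
    using q \<epsilon> by (intro mult_mono) auto
  hence qq\<epsilon>: "real q * (real q * \<epsilon> / 2) < 1/4" using M\<epsilon> by linarith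
  define z where "z = int q * n - j * int p"
  have "real q * (j * farey_slope \<epsilon> p q - real q * \<epsilon> / 2) < real q * n"
    using near(1) q by (intro mult_strict_left_mono) auto
  moreover have "real q * n \<le> real q * (j * farey_slope \<epsilon> p q + real q * \<epsilon> / 2)"
    using near(2) by (intro mult_left_mono) auto
  moreover have "real q * (x - c) = real q * x - real q * c" "real q * (x + c) = real q * x + real q * c"
    if "x = j * farey_slope \<epsilon> p q" "c = real q * \<epsilon> / 2" for x c
    by (simp_all add: algebra_simps)
  moreover have "real_of_int z = real q * n - j * real p" unfolding z_def by simp
  ultimately have "- 1 < real_of_int z" "real_of_int z < 1"
    using jqa jq\<epsilon> qq\<epsilon> unfolding abs_less_iff by (simp_all add: algebra_simps)
  hence "int q * n = j * int p" unfolding z_def by linarith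
  then obtain m where m: "j = int q * m" "n = m * int p"
    using coprime_integer_relation[OF cop q(1)] by blast
  have "real_of_int j * farey_slope \<epsilon> p q = real_of_int n + m * (real q * \<epsilon>)"
    using m q_farey_slope[OF q(1)] by (simp add: algebra_simps)
  hence "(m - 1/2) * (real q * \<epsilon>) < 0" "0 \<le> (m + 1/2) * (real q * \<epsilon>)"
    using near by (simp_all add: algebra_simps)
  moreover have "0 < real q * \<epsilon>" using q \<epsilon> by simp
  moreover have "a < 0" if "a * x < 0" "0 < x" for a x :: real
    using that by (simp add: mult_less_0_iff)
  moreover have "0 \<le> a" if "0 \<le> a * x" "0 < x" for a x :: real
    using that by (simp add: zero_le_mult_iff)
  ultimately have "m - 1/2 < 0" "0 \<le> m + 1/2" by blast+
  hence "real_of_int m < 1" "real_of_int (- 1) < real_of_int m" by linarith+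
  hence "m = 0" by linarith
  thus "j = 0" using m by simp
qed

lemma denominator_times_small:
  assumes "q \<le> M" "0 < \<epsilon>" "\<epsilon> * (real M)^2 < 1/2"
  shows "real q * \<epsilon> < 1/2"
proof -
  have "real q * \<epsilon> \<le> real M * \<epsilon>" using assms by simp
  also have "\<dots> \<le> \<epsilon> * (real M)^2" using assms by (cases M) (auto simp: power2_eq_square)
  finally show ?thesis using assms(3) by linarith
qed

text \<open>The intercept making the line n (p/q + \<epsilon>) + \<beta> pass at distance q \<epsilon> / 2 below an
  integer at n = t, so that the window [t, t + q) is the one containing p + 1 letters 1.\<close>
definition farey_phase :: "real \<Rightarrow> nat \<Rightarrow> nat \<Rightarrow> nat \<Rightarrow> real" where
  "farey_phase \<epsilon> p q t =
     of_int \<lceil>real t * farey_slope \<epsilon> p q + real q * \<epsilon> / 2\<rceil> - (real t * farey_slope \<epsilon> p q + real q * \<epsilon> / 2)"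

lemma farey_phase_bounds: "0 \<le> farey_phase \<epsilon> p q t" "farey_phase \<epsilon> p q t < 1"
  unfolding farey_phase_def by linarith+

lemma farey_line_shift:
  fixes \<epsilon> :: real and p q t :: nat and i :: int
  assumes "q \<ge> 1"
  defines "\<alpha> \<equiv> farey_slope \<epsilon> p q" and "c \<equiv> real q * \<epsilon> / 2"
  defines "Y \<equiv> \<lceil>real t * \<alpha> + c\<rceil>"
  shows "of_int i * \<alpha> + farey_phase \<epsilon> p q t = of_int (i - int t) * \<alpha> + of_int Y - c"
    and "of_int (i + int q) * \<alpha> + farey_phase \<epsilon> p q t = of_int (i - int t) * \<alpha> + of_int (Y + int p) + c"
  using q_farey_slope[OF assms(1), of \<epsilon> p]
  unfolding farey_phase_def \<alpha>_def c_def Y_def by (simp_all add: algebra_simps)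

lemma farey_window_heavy:
  fixes \<epsilon> :: real and p q t :: nat
  assumes q: "q \<ge> 1" and \<epsilon>: "0 < \<epsilon>" "real q * \<epsilon> < 1"
  defines "\<alpha> \<equiv> farey_slope \<epsilon> p q" and "\<beta> \<equiv> farey_phase \<epsilon> p q t"
  shows "floor_line \<alpha> \<beta> (int t + int q) - floor_line \<alpha> \<beta> (int t) = int p + 1"
proof -
  define c where "c = real q * \<epsilon> / 2"
  define Y where "Y = \<lceil>real t * \<alpha> + c\<rceil>"
  have c: "0 < c" "c < 1" unfolding c_def using \<epsilon> q by auto
  have "floor_line \<alpha> \<beta> (int t) = \<lfloor>of_int Y - c\<rfloor>"
    "floor_line \<alpha> \<beta> (int t + int q) = \<lfloor>of_int (Y + int p) + c\<rfloor>"
    using farey_line_shift[OF q, of "int t" \<epsilon> p t]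
    unfolding floor_line_def \<alpha>_def \<beta>_def c_def Y_def by simp_all
  moreover have "\<lfloor>of_int Y - c\<rfloor> = Y - 1" "\<lfloor>of_int (Y + int p) + c\<rfloor> = Y + int p"
    using c by (simp_all add: floor_eq_iff)
  ultimately show ?thesis by simp
qed

lemma farey_window_unique:
  assumes cop: "coprime p q" and q: "1 \<le> q" "q \<le> M" and \<epsilon>: "0 < \<epsilon>" "\<epsilon> * (real M)^2 < 1/2"
    and "t + q \<le> M" "i + q \<le> M"
  defines "\<alpha> \<equiv> farey_slope \<epsilon> p q" and "\<beta> \<equiv> farey_phase \<epsilon> p q t"
  assumes heavy: "floor_line \<alpha> \<beta> (int i + int q) - floor_line \<alpha> \<beta> (int i) = int p + 1"
  shows "i = t"
proof -
  define c where "c = real q * \<epsilon> / 2"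
  define Y where "Y = \<lceil>real t * \<alpha> + c\<rceil>"
  define j where "j = int i - int t"
  define X where "X = of_int j * \<alpha> + of_int Y - c"
  have "of_int (int i) * \<alpha> + \<beta> = X"
    "of_int (int i + int q) * \<alpha> + \<beta> = (X + 2 * c) + of_int (int p)"
    using farey_line_shift[OF q(1), of "int i" \<epsilon> p t]
    unfolding \<alpha>_def \<beta>_def c_def Y_def X_def j_def by simp_all
  hence "floor_line \<alpha> \<beta> (int i) = \<lfloor>X\<rfloor>"
    "floor_line \<alpha> \<beta> (int i + int q) = \<lfloor>X + 2 * c\<rfloor> + int p"
    unfolding floor_line_def by (simp_all only: floor_add_int)
  hence "\<lfloor>X + 2 * c\<rfloor> = \<lfloor>X\<rfloor> + 1" using heavy by simp
  hence "of_int (\<lfloor>X\<rfloor> + 1) \<le> X + 2 * c" "X < of_int (\<lfloor>X\<rfloor> + 1)"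
    by (metis of_int_floor_le, linarith)
  hence "j * \<alpha> - c < of_int (\<lfloor>X\<rfloor> + 1 - Y)" "of_int (\<lfloor>X\<rfloor> + 1 - Y) \<le> j * \<alpha> + c"
    unfolding of_int_diff[of "\<lfloor>X\<rfloor> + 1"] unfolding X_def by linarith+
  moreover have "\<bar>j\<bar> \<le> int M" unfolding j_def using assms(6,7) by auto
  ultimately have "j = 0"
    using farey_slope_multiple_far_from_integers[OF cop q \<epsilon>] unfolding \<alpha>_def c_def by blast
  thus ?thesis unfolding j_def by simp
qed

text \<open>Triples ((p, q), t): a reduced fraction p / q of admissible size and the start t of
  the window of length q in [0, M) singled out by the phase.\<close>
definition farey_shifts :: "nat \<Rightarrow> nat \<Rightarrow> ((nat \<times> nat) \<times> nat) set" where
  "farey_shifts M b = Sigma {x \<in> farey_pairs M b. coprime (fst x) (snd x)} (\<lambda>x. {0..M - snd x})"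

lemma mem_farey_shifts:
  "((p, q), t) \<in> farey_shifts M b \<longleftrightarrow>
     1 \<le> p \<and> p < q \<and> q \<le> M \<and> b * q \<le> M * p \<and> coprime p q \<and> t + q \<le> M"
  unfolding farey_shifts_def farey_pairs_def by auto

definition farey_factor :: "real \<Rightarrow> nat \<Rightarrow> (nat \<times> nat) \<times> nat \<Rightarrow> int list" where
  "farey_factor \<epsilon> M = (\<lambda>((p, q), t). mechanical_factor (farey_slope \<epsilon> p q) (farey_phase \<epsilon> p q t) M)"

text \<open>If two of the factors coincide, the window [t, t + q) of the first one contains p + 1
  letters 1 in the second one as well, so p < q (p' / q' + \<epsilon>) and hence p / q \<le> p' / q'.\<close>
lemma farey_factor_eq_imp_le:
  assumes eq: "farey_factor \<epsilon> M ((p, q), t) = farey_factor \<epsilon> M ((p', q'), t')"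
    and q: "1 \<le> q" "q \<le> M" "t + q \<le> M" and q': "1 \<le> q'" "q' \<le> M"
    and \<epsilon>: "0 < \<epsilon>" "\<epsilon> * (real M)^2 < 1/2"
  shows "p * q' \<le> p' * q"
proof -
  let ?\<alpha>' = "farey_slope \<epsilon> p' q'" and ?\<beta>' = "farey_phase \<epsilon> p' q' t'"
  have "floor_line (farey_slope \<epsilon> p q) (farey_phase \<epsilon> p q t) (int t + int q)
        - floor_line (farey_slope \<epsilon> p q) (farey_phase \<epsilon> p q t) (int t) = int p + 1"
    using denominator_times_small[OF q(2) \<epsilon>] q \<epsilon> by (intro farey_window_heavy) auto
  moreover have "floor_line (farey_slope \<epsilon> p q) (farey_phase \<epsilon> p q t) (int (t + q))
        - floor_line (farey_slope \<epsilon> p q) (farey_phase \<epsilon> p q t) (int t)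
      = floor_line ?\<alpha>' ?\<beta>' (int (t + q)) - floor_line ?\<alpha>' ?\<beta>' (int t)"
    using eq q by (intro mechanical_factor_eq_windows) (auto simp: farey_factor_def)
  ultimately have "real p < real q * ?\<alpha>'"
    by (intro heavy_window_slope[of _ ?\<beta>' "int t"]) simp
  hence "real p * real q' < real q * ?\<alpha>' * real q'"
    using q' by (intro mult_strict_right_mono) auto
  also have "\<dots> = real q * (real q' * ?\<alpha>')" by (simp add: mult_ac)
  also have "\<dots> = real q * real p' + real q * real q' * \<epsilon>"
    using q_farey_slope[OF q'(1)] by (simp add: algebra_simps)
  finally have "real p * real q' < real q * real p' + real q * real q' * \<epsilon>" .
  moreover have "real q * real q' \<le> real M * real M" using q q' by (intro mult_mono) auto
  hence "real q * real q' * \<epsilon> \<le> \<epsilon> * (real M)^2"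
    using \<epsilon> by (simp add: power2_eq_square mult.commute)
  ultimately have "real p * real q' < real q * real p' + 1" using \<epsilon> by linarith
  hence "real (p * q') < real (p' * q + 1)" by (simp add: mult.commute)
  thus ?thesis by linarith
qed

lemma coprime_fraction_eq:
  fixes p q p' q' :: nat
  assumes "coprime p q" "coprime p' q'" "p * q' = p' * q" "q > 0"
  shows "p = p' \<and> q = q'"
proof -
  have "q dvd p * q'" "q' dvd p' * q" using assms(3) by (metis dvd_triv_right)+
  hence "q dvd q'" "q' dvd q"
    using assms(1,2) by (metis coprime_commute coprime_dvd_mult_right_iff)+
  hence "q = q'" by (rule dvd_antisym)
  thus ?thesis using assms(3,4) by simp
qed

text \<open>The factors attached to distinct triples are distinct: the slope is recovered from
  the heavy window by the previous lemma, then the window itself is unique.\<close>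
lemma inj_on_farey_factor:
  assumes \<epsilon>: "0 < \<epsilon>" "\<epsilon> * (real M)^2 < 1/2"
  shows "inj_on (farey_factor \<epsilon> M) (farey_shifts M b)"
proof (rule inj_onI)
  fix y y' assume "y \<in> farey_shifts M b" "y' \<in> farey_shifts M b" "farey_factor \<epsilon> M y = farey_factor \<epsilon> M y'"
  moreover obtain p q t p' q' t' where "y = ((p, q), t)" "y' = ((p', q'), t')"
    by (metis prod.exhaust)
  ultimately have y: "((p, q), t) \<in> farey_shifts M b" "((p', q'), t') \<in> farey_shifts M b"
    and eq: "farey_factor \<epsilon> M ((p, q), t) = farey_factor \<epsilon> M ((p', q'), t')"
    by simp_all
  have c: "1 \<le> p" "p < q" "q \<le> M" "coprime p q" "t + q \<le> M"
    and c': "1 \<le> p'" "p' < q'" "q' \<le> M" "coprime p' q'" "t' + q' \<le> M"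
    using y by (auto simp: mem_farey_shifts)
  have q1: "1 \<le> q" "1 \<le> q'" using c c' by simp_all
  have "p * q' = p' * q"
    using farey_factor_eq_imp_le[OF eq q1(1) c(3) c(5) q1(2) c'(3) \<epsilon>]
      farey_factor_eq_imp_le[OF eq[symmetric] q1(2) c'(3) c'(5) q1(1) c(3) \<epsilon>] by simp
  hence pq: "p = p'" "q = q'" using coprime_fraction_eq[OF c(4) c'(4)] c by auto
  have "floor_line (farey_slope \<epsilon> p q) (farey_phase \<epsilon> p q t) (int t + int q)
      - floor_line (farey_slope \<epsilon> p q) (farey_phase \<epsilon> p q t) (int t) = int p + 1"
    using denominator_times_small[OF c(3) \<epsilon>] c \<epsilon> by (intro farey_window_heavy) auto
  moreover have "mechanical_factor (farey_slope \<epsilon> p q) (farey_phase \<epsilon> p q t) M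
      = mechanical_factor (farey_slope \<epsilon> p q) (farey_phase \<epsilon> p q t') M"
    using eq pq by (simp add: farey_factor_def)
  from mechanical_factor_eq_windows[OF this, of t "t + q"]
  have "floor_line (farey_slope \<epsilon> p q) (farey_phase \<epsilon> p q t) (int t + int q)
      - floor_line (farey_slope \<epsilon> p q) (farey_phase \<epsilon> p q t) (int t)
      = floor_line (farey_slope \<epsilon> p q) (farey_phase \<epsilon> p q t') (int t + int q)
      - floor_line (farey_slope \<epsilon> p q) (farey_phase \<epsilon> p q t') (int t)"
    using c by simp
  ultimately have "floor_line (farey_slope \<epsilon> p q) (farey_phase \<epsilon> p q t') (int t + int q)
      - floor_line (farey_slope \<epsilon> p q) (farey_phase \<epsilon> p q t') (int t) = int p + 1"
    by simp
  hence "t = t'"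
    using farey_window_unique[OF c(4) _ c(3) \<epsilon>, of t' t] c c' pq by simp
  thus "y = y'" using pq \<open>y = ((p, q), t)\<close> \<open>y' = ((p', q'), t')\<close> by simp
qed

text \<open>For irrational \<epsilon>, each triple yields a Sturmian factor of length M; its slope is at
  least p / q \<ge> b / M and its phase vanishes at 0, so it contains at least b letters 1.\<close>
lemma farey_factor_counted:
  assumes \<epsilon>: "0 < \<epsilon>" "\<epsilon> * (real M)^2 < 1/2" "\<epsilon> \<notin> \<rat>" and y: "y \<in> farey_shifts M b"
  shows "farey_factor \<epsilon> M y \<in> {w. sturmian_factor w \<and> length w = M \<and> b \<le> length (filter (\<lambda>x. x = 1) w)}"
proof -
  obtain p q t where yd: "y = ((p, q), t)" by (metis prod.exhaust)
  have c: "1 \<le> p" "p < q" "q \<le> M" "b * q \<le> M * p" using y yd by (auto simp: mem_farey_shifts)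
  define \<alpha> where "\<alpha> = farey_slope \<epsilon> p q"
  define \<beta> where "\<beta> = farey_phase \<epsilon> p q t"
  have \<beta>: "0 \<le> \<beta>" "\<beta> < 1" unfolding \<beta>_def by (rule farey_phase_bounds)+
  have "0 < \<alpha>" unfolding \<alpha>_def farey_slope_def using \<epsilon> by (simp add: add_nonneg_pos)
  moreover have "\<alpha> < 1"
  proof -
    have "real q * \<alpha> = real p + real q * \<epsilon>" unfolding \<alpha>_def using q_farey_slope c by simp
    also have "\<dots> < real q" using denominator_times_small[OF c(3) \<epsilon>(1,2)] c by linarith
    finally show ?thesis using c by simp
  qed
  moreover have "\<alpha> \<notin> \<rat>"
  proof
    assume "\<alpha> \<in> \<rat>"
    hence "\<alpha> - real p / real q \<in> \<rat>" by (intro Rats_diff Rats_divide) auto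
    thus False using \<epsilon>(3) unfolding \<alpha>_def farey_slope_def by simp
  qed
  ultimately have factor: "sturmian_factor (mechanical_factor \<alpha> \<beta> M)"
    using \<beta> by (rule mechanical_factor_sturmian)
  have "real b * real q \<le> real M * real p" using c(4) by (metis of_nat_le_iff of_nat_mult)
  hence "real b \<le> real M * (real p / real q)" using c by (simp add: field_simps)
  also have "\<dots> \<le> real M * \<alpha> + \<beta>"
    unfolding \<alpha>_def farey_slope_def using \<epsilon> \<beta> by (simp add: distrib_left)
  finally have "int b \<le> floor_line \<alpha> \<beta> (int M)" unfolding floor_line_def by (simp add: le_floor_iff)
  moreover have "floor_line \<alpha> \<beta> 0 = 0" unfolding floor_line_def using \<beta> by (simp add: floor_eq_iff)
  moreover have "int (length (filter (\<lambda>x. x = 1) (mechanical_factor \<alpha> \<beta> M)))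
      = floor_line \<alpha> \<beta> (int M) - floor_line \<alpha> \<beta> 0"
    using count_ones_eq_sum_list[OF sturmian_factor_letters[OF factor]] sum_list_mechanical_factor
    by simp
  ultimately show ?thesis using factor yd unfolding farey_factor_def \<alpha>_def \<beta>_def by simp
qed

lemma card_farey_shifts:
  "real (card (farey_shifts M b))
     = (\<Sum>x \<in> farey_pairs M b. if coprime (fst x) (snd x) then real M + 1 - real (snd x) else 0)"
proof -
  have fin: "finite {x \<in> farey_pairs M b. coprime (fst x) (snd x)}"
    using finite_farey_pairs by simp
  have "real (card (farey_shifts M b))
      = (\<Sum>x \<in> {x \<in> farey_pairs M b. coprime (fst x) (snd x)}. real (card {0..M - snd x}))"
    unfolding farey_shifts_def using fin by (simp add: card_SigmaI)
  also have "\<dots> = (\<Sum>x \<in> {x \<in> farey_pairs M b. coprime (fst x) (snd x)}. real M + 1 - real (snd x))"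
    by (rule sum.cong) (auto simp: farey_pairs_def of_nat_diff)
  also have "\<dots> = (\<Sum>x \<in> farey_pairs M b. if coprime (fst x) (snd x) then real M + 1 - real (snd x) else 0)"
    by (rule sum.inter_filter[OF finite_farey_pairs])
  finally show ?thesis .
qed

text \<open>Irrational perturbations exist at every scale: the rationals are countable.\<close>
lemma exists_irrational_between:
  assumes "(r::real) > 0"
  shows "\<exists>\<epsilon>. 0 < \<epsilon> \<and> \<epsilon> < r \<and> \<epsilon> \<notin> \<rat>"
proof (rule ccontr)
  assume "\<not> ?thesis"
  hence "{0<..<r} \<subseteq> \<rat>" by auto
  hence "countable {0<..<r}" using countable_rat countable_subset by blast
  thus False using uncountable_open_interval[of 0 r] assms by simp
qed

lemma finite_H_set:
  "finite {w. sturmian_factor w \<and> length w = M \<and> b \<le> length (filter (\<lambda>x. x = 1) w)}"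
proof (rule finite_subset)
  show "finite {xs. set xs \<subseteq> {0::int, 1} \<and> length xs = M}"
    by (rule finite_lists_length_eq) simp
qed (use sturmian_factor_letters in auto)

lemma H_lower_bound:
  assumes M: "M \<ge> 1" and b: "b \<le> M"
  shows "real (H M b) \<ge> (real M - real b) * (real M)^2 / pi^2 - 4 * (real M)^2 * harm M"
proof -
  have "1 / (2 * (real M)^2) > 0" using M by simp
  then obtain \<epsilon> where \<epsilon>: "0 < \<epsilon>" "\<epsilon> < 1 / (2 * (real M)^2)" "\<epsilon> \<notin> \<rat>"
    using exists_irrational_between by blast
  have \<epsilon>M: "\<epsilon> * (real M)^2 < 1/2" using \<epsilon>(2) M by (simp add: field_simps)
  have "card (farey_shifts M b) = card (farey_factor \<epsilon> M ` farey_shifts M b)"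
    using inj_on_farey_factor[OF \<epsilon>(1) \<epsilon>M] by (simp add: card_image)
  also have "\<dots> \<le> H M b"
    unfolding H_def using farey_factor_counted[OF \<epsilon>(1) \<epsilon>M \<epsilon>(3)] finite_H_set
    by (intro card_mono) auto
  finally show ?thesis
    using coprime_farey_weight_lower[OF M b] card_farey_shifts[of M b] by linarith
qed

lemma harm_le_ln: "M \<ge> 1 \<Longrightarrow> (harm M :: real) \<le> ln (real M) + 1"
  using euler_mascheroni_sequence_decreasing[of 1 M] by (simp add: harm_def)

text \<open>The error term: 4 M^2 harm M \<le> 4 M^2 (1 + ln M) \<le> 4 (1 + 1/\<delta>) M^(2+\<delta>).\<close>
theorem mainTheorem8:
  fixes \<delta> :: real
  assumes "\<delta> > 0"
  shows "\<exists>K::real. \<forall>M b::nat. 1 \<le> M \<longrightarrow> b \<le> M \<longrightarrow>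
           real (H M b) \<ge> (1 / pi^2) * (real M - real b) * (real M)^2 - K * (real M) powr (2 + \<delta>)"
proof (intro exI allI impI)
  fix M b :: nat assume M: "1 \<le> M" and b: "b \<le> M"
  have "1 \<le> real M powr \<delta>" using M assms by (intro ge_one_powr_ge_zero) auto
  hence "harm M \<le> (1 + 1 / \<delta>) * real M powr \<delta>"
    using harm_le_ln[OF M] ln_powr_bound[of "real M" \<delta>] M assms by (simp add: algebra_simps)
  hence "4 * (real M)^2 * harm M \<le> 4 * (real M)^2 * ((1 + 1 / \<delta>) * real M powr \<delta>)"
    by (intro mult_left_mono) simp_all
  also have "\<dots> = 4 * (1 + 1 / \<delta>) * real M powr (2 + \<delta>)"
    using M by (simp add: powr_add)
  finally show "real (H M b) \<ge> (1 / pi^2) * (real M - real b) * (real M)^2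
      - 4 * (1 + 1 / \<delta>) * real M powr (2 + \<delta>)"
    using H_lower_bound[OF M b] by simp
qed

end
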